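(* Let $f,g_1,\dots,g_m:\mathbb{R}^n\to\mathbb{R}$ be twice continuously differentiable convex functions on $\mathbb{R}^n_+$, $g=\mathrm{col}(g_1,\dots,g_m)$, $\bar n=n+m$, $\phi(x,y)=\mathrm{col}\big(\nabla f(x)+\sum_{i=1}^m y_i\nabla g_i(x),\ -g(x)\big)$ on $\mathbb{R}^{\bar n}_+$, and define $\psi:\mathbb{R}^{\bar n+1}_{++}\to\mathbb{R}^{\bar n+1}$ by $\psi(\bar x,\tau)=\mathrm{col}\big(\tau\phi(\bar x/\tau),\ -\bar x^\top\phi(\bar x/\tau)\big)$. Then the Jacobian $\nabla\psi(\hat x)$ is positive semidefinite (i.e. $d^\top\nabla\psi(\hat x)d\ge0$ for all $d$) for every $\hat x\in\mathbb{R}^{\bar n+1}_{++}$. Furthermore, $\psi$ is a continuous monotone mapping on $\mathbb{R}^{\bar n+1}_{++}$, i.e. $(\hat x^1-\hat x^2)^\top(\psi(\hat x^1)-\psi(\hat x^2))\ge0$ for all $\hat x^1,\hat x^2\in\mathbb{R}^{\bar n+1}_{++}$.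
   Context: $\mathbb{R}^{p}_{++}$ denotes the set of vectors with all components strictly positive. *)

theory Defs
  imports "HOL-Analysis.Analysis"
begin

text \<open>Closed and open nonnegative orthants of a Euclidean space
  (for product spaces such as R^n x R^m x R the basis is the union of the
  component bases, so this is the componentwise condition).\<close>
definition nonneg_orthant :: "'a::euclidean_space set" where
  "nonneg_orthant = {x. \<forall>b\<in>Basis. 0 \<le> x \<bullet> b}"

definition pos_orthant :: "'a::euclidean_space set" where
  "pos_orthant = {x. \<forall>b\<in>Basis. 0 < x \<bullet> b}"

definition grad :: "(real^'n \<Rightarrow> real) \<Rightarrow> real^'n \<Rightarrow> real^'n" where
  "grad f x = (\<chi> i. frechet_derivative f (at x) (axis i 1))"

definition twice_cont_diff :: "(real^'n \<Rightarrow> real) \<Rightarrow> bool" where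
  "twice_cont_diff f \<longleftrightarrow>
     (\<forall>x. f differentiable at x) \<and>
     (\<forall>x. grad f differentiable at x) \<and>
     (\<forall>v. continuous_on UNIV (\<lambda>x. frechet_derivative (grad f) (at x) v))"

definition phi :: "(real^'n \<Rightarrow> real) \<Rightarrow> ('m::finite \<Rightarrow> real^'n \<Rightarrow> real)
     \<Rightarrow> (real^'n) \<times> (real^'m) \<Rightarrow> (real^'n) \<times> (real^'m)" where
  "phi f g xy =
     (grad f (fst xy) + (\<Sum>i\<in>UNIV. (snd xy $ i) *\<^sub>R grad (g i) (fst xy)),
      - (\<chi> i. g i (fst xy)))"

definition psi :: "(real^'n \<Rightarrow> real) \<Rightarrow> ('m::finite \<Rightarrow> real^'n \<Rightarrow> real)
     \<Rightarrow> ((real^'n) \<times> (real^'m)) \<times> real \<Rightarrow> ((real^'n) \<times> (real^'m)) \<times> real" where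
  "psi f g xt =
     (snd xt *\<^sub>R phi f g ((1 / snd xt) *\<^sub>R fst xt),
      - (fst xt \<bullet> phi f g ((1 / snd xt) *\<^sub>R fst xt)))"

end

theory Submission
  imports Defs
begin

text \<open>
  psi is the homogenization of phi. phi is monotone on the nonnegative orthant: gradients of
  convex functions are monotone, and since y \<ge> 0 the tangent inequalities of the g i make
  the coupling terms between y and g nonnegative. Writing xk = tk uk, the pairing
  ((x1, t1) - (x2, t2)) \<bullet> (psi (x1, t1) - psi (x2, t2)) equals
  t1 t2 (u1 - u2) \<bullet> (phi u1 - phi u2), so psi is monotone where t > 0.
  The derivative D of a monotone map is positive semidefinite, since d \<bullet> D d is the limit
  of the nonnegative quotients d \<bullet> (F (x + s d) - F x) / s as s tends to 0 from above.
\<close>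

lemma pos_orthant_Pair_iff:
  "((x, y)::'a::euclidean_space \<times> 'b::euclidean_space) \<in> pos_orthant \<longleftrightarrow>
    x \<in> pos_orthant \<and> y \<in> pos_orthant"
  by (simp add: pos_orthant_def Basis_prod_def ball_Un)

lemma nonneg_orthant_Times:
  "(nonneg_orthant :: ('a::euclidean_space \<times> 'b::euclidean_space) set) = nonneg_orthant \<times> nonneg_orthant"
  by (auto simp: nonneg_orthant_def Basis_prod_def ball_Un)

lemma pos_orthant_real_iff: "(t::real) \<in> pos_orthant \<longleftrightarrow> 0 < t"
  by (simp add: pos_orthant_def)

lemma scaleR_pos_orthant: "0 < c \<Longrightarrow> x \<in> pos_orthant \<Longrightarrow> c *\<^sub>R x \<in> pos_orthant"
  by (simp add: pos_orthant_def)

lemma pos_orthant_subset_nonneg_orthant: "pos_orthant \<subseteq> nonneg_orthant"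
  by (auto simp: pos_orthant_def nonneg_orthant_def less_imp_le)

lemma pos_orthant_subset_scaled_nonneg_orthant:
  "(pos_orthant :: ('a::euclidean_space \<times> real) set) \<subseteq>
    {(x, t). 0 < t \<and> (1 / t) *\<^sub>R x \<in> nonneg_orthant}"
proof clarify
  fix x :: 'a and t :: real
  assume "(x, t) \<in> pos_orthant"
  then have "0 < t" "x \<in> pos_orthant"
    by (simp_all add: pos_orthant_Pair_iff pos_orthant_real_iff)
  then show "0 < t \<and> (1 / t) *\<^sub>R x \<in> nonneg_orthant"
    using scaleR_pos_orthant[of "1 / t" x] pos_orthant_subset_nonneg_orthant by auto
qed

lemma open_pos_orthant: "open (pos_orthant :: 'a::euclidean_space set)"
proof -
  have "pos_orthant = (\<Inter>b\<in>Basis. {x::'a. b \<bullet> x > 0})"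
    by (auto simp: pos_orthant_def inner_commute)
  moreover have "open (\<Inter>b\<in>Basis. {x::'a. b \<bullet> x > 0})"
    by (intro open_INT finite_Basis ballI open_halfspace_gt)
  ultimately show ?thesis by simp
qed

lemma has_derivative_directional_at_right:
  fixes f :: "'a::real_normed_vector \<Rightarrow> real"
  assumes f: "(f has_derivative D) (at x)"
  shows "((\<lambda>t. (f (x + t *\<^sub>R v) - f x) / t) \<longlongrightarrow> D v) (at_right 0)"
proof -
  have "((\<lambda>t::real. x + t *\<^sub>R v) has_derivative (\<lambda>t. t *\<^sub>R v)) (at 0)"
    by (auto intro!: derivative_eq_intros)
  moreover have "(f has_derivative D) (at (x + 0 *\<^sub>R v))"
    using f by simp
  ultimately have "((\<lambda>t. f (x + t *\<^sub>R v)) has_derivative (\<lambda>t. D (t *\<^sub>R v))) (at 0)"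
    by (rule has_derivative_compose)
  then have "((\<lambda>t. f (x + t *\<^sub>R v)) has_field_derivative D v) (at 0)"
    by (rule has_derivative_imp_has_field_derivative)
      (simp add: linear_scale[OF has_derivative_linear[OF f]])
  then have "((\<lambda>t. (f (x + t *\<^sub>R v) - f x) / t) \<longlongrightarrow> D v) (at 0)"
    by (simp add: has_field_derivative_iff)
  then show ?thesis
    by (rule filterlim_mono) (auto simp: at_le)
qed

lemma convex_on_has_derivative_above_tangent:
  fixes f :: "'a::real_normed_vector \<Rightarrow> real"
  assumes convex: "convex_on S f" and x: "x \<in> S" and y: "y \<in> S"
    and f: "(f has_derivative D) (at x)"
  shows "f x + D (y - x) \<le> f y"
proof -
  have "\<forall>\<^sub>F t in at_right 0. (f (x + t *\<^sub>R (y - x)) - f x) / t \<le> f y - f x"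
    using eventually_at_right_real[OF zero_less_one]
  proof eventually_elim
    case (elim t)
    have "x + t *\<^sub>R (y - x) = (1 - t) *\<^sub>R x + t *\<^sub>R y"
      by (simp add: algebra_simps)
    with convex_onD[OF convex, of t x y] elim x y
    have "f (x + t *\<^sub>R (y - x)) - f x \<le> t * (f y - f x)"
      by (simp add: algebra_simps)
    with elim show ?case
      by (simp add: divide_le_eq mult.commute)
  qed
  from tendsto_upperbound[OF has_derivative_directional_at_right[OF f] this]
  show ?thesis by simp
qed

lemma grad_inner_eq:
  fixes f :: "real^'n \<Rightarrow> real"
  assumes "(f has_derivative D) (at x)"
  shows "grad f x \<bullet> v = D v"
proof -
  have "D v = D (\<Sum>i\<in>UNIV. v $ i *\<^sub>R axis i 1)"
    using basis_expansion[of v] by (simp add: scalar_mult_eq_scaleR)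
  also have "\<dots> = (\<Sum>i\<in>UNIV. v $ i * D (axis i 1))"
    using has_derivative_linear[OF assms] by (simp add: linear_sum linear_scale)
  finally show ?thesis
    using frechet_derivative_at[OF assms]
    by (simp add: grad_def inner_vec_def mult.commute)
qed

lemma convex_on_grad_above_tangent:
  fixes f :: "real^'n \<Rightarrow> real"
  assumes "convex_on S f" "x \<in> S" "y \<in> S" "f differentiable at x"
  shows "f x + grad f x \<bullet> (y - x) \<le> f y"
  using assms convex_on_has_derivative_above_tangent grad_inner_eq
  unfolding differentiable_def by metis

lemma convex_on_grad_monotone:
  fixes f :: "real^'n \<Rightarrow> real"
  assumes "convex_on S f" "x \<in> S" "y \<in> S" "f differentiable at x" "f differentiable at y"
  shows "0 \<le> (x - y) \<bullet> (grad f x - grad f y)"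
  using convex_on_grad_above_tangent[of S f x y] convex_on_grad_above_tangent[of S f y x] assms
  by (simp add: inner_diff_left inner_diff_right inner_commute)

definition monotone_map_on :: "'a::real_inner set \<Rightarrow> ('a \<Rightarrow> 'a) \<Rightarrow> bool" where
  "monotone_map_on S F \<longleftrightarrow> (\<forall>x\<in>S. \<forall>y\<in>S. 0 \<le> (x - y) \<bullet> (F x - F y))"

lemma monotone_map_on_subset: "monotone_map_on S F \<Longrightarrow> T \<subseteq> S \<Longrightarrow> monotone_map_on T F"
  by (auto simp: monotone_map_on_def)

lemma monotone_map_on_has_derivative_nonneg:
  assumes mono: "monotone_map_on S F" and S: "open S" "x \<in> S"
    and F: "(F has_derivative D) (at x)"
  shows "0 \<le> d \<bullet> D d"
proof -
  have "((\<lambda>y. d \<bullet> F y) has_derivative (\<lambda>v. d \<bullet> D v)) (at x)"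
    using F by (auto intro!: derivative_eq_intros)
  from has_derivative_directional_at_right[OF this]
  have lim: "((\<lambda>t. (d \<bullet> F (x + t *\<^sub>R d) - d \<bullet> F x) / t) \<longlongrightarrow> d \<bullet> D d) (at_right 0)" .
  have "((\<lambda>t::real. x + t *\<^sub>R d) \<longlongrightarrow> x) (at_right 0)"
    by (auto intro!: tendsto_eq_intros)
  then have "\<forall>\<^sub>F t in at_right 0. x + t *\<^sub>R d \<in> S"
    using S by (rule topological_tendstoD)
  moreover have "\<forall>\<^sub>F t in at_right (0::real). 0 < t"
    by (simp add: eventually_at_right_less)
  ultimately have "\<forall>\<^sub>F t in at_right 0. 0 \<le> (d \<bullet> F (x + t *\<^sub>R d) - d \<bullet> F x) / t"
  proof eventually_elim
    case (elim t)
    with mono S have "0 \<le> ((x + t *\<^sub>R d) - x) \<bullet> (F (x + t *\<^sub>R d) - F x)"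
      unfolding monotone_map_on_def by blast
    with elim show ?case
      by (simp add: inner_diff_right zero_le_mult_iff)
  qed
  from tendsto_lowerbound[OF lim this] show ?thesis by simp
qed

lemma inner_phi_diff:
  "((x1, y1) - (x2, y2)) \<bullet> (phi f g (x1, y1) - phi f g (x2, y2)) =
     (x1 - x2) \<bullet> (grad f x1 - grad f x2) +
     (\<Sum>i\<in>UNIV. y1 $ i * (grad (g i) x1 \<bullet> (x1 - x2) - (g i x1 - g i x2))
       + y2 $ i * ((g i x1 - g i x2) - grad (g i) x2 \<bullet> (x1 - x2)))"
proof -
  have "(y1 - y2) \<bullet> (- (\<chi> i. g i x1) - - (\<chi> i. g i x2)) =
      (\<Sum>i\<in>UNIV. (y1 $ i - y2 $ i) * (g i x2 - g i x1))"
    by (simp add: inner_vec_def algebra_simps)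
  then show ?thesis
    by (simp add: phi_def inner_sum_right inner_commute sum.distrib sum_subtractf algebra_simps)
qed

lemma monotone_map_on_phi:
  fixes f :: "real^'n \<Rightarrow> real" and g :: "'m::finite \<Rightarrow> real^'n \<Rightarrow> real"
  assumes cf: "convex_on S f" and cg: "\<And>i. convex_on S (g i)"
    and df: "\<And>x. f differentiable at x" and dg: "\<And>i x. g i differentiable at x"
  shows "monotone_map_on (S \<times> nonneg_orthant) (phi f g)"
proof -
  have "0 \<le> ((x1, y1) - (x2, y2)) \<bullet> (phi f g (x1, y1) - phi f g (x2, y2))"
    if x: "x1 \<in> S" "x2 \<in> S" and y: "y1 \<in> nonneg_orthant" "y2 \<in> nonneg_orthant"
    for x1 x2 :: "real^'n" and y1 y2 :: "real^'m"
  proof -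
    have "0 \<le> y1 $ i * (grad (g i) x1 \<bullet> (x1 - x2) - (g i x1 - g i x2))
            + y2 $ i * ((g i x1 - g i x2) - grad (g i) x2 \<bullet> (x1 - x2))" for i
    proof -
      have "0 \<le> y1 $ i" "0 \<le> y2 $ i"
        using y by (auto simp: nonneg_orthant_def Basis_vec_def cart_eq_inner_axis)
      moreover have "g i x1 - g i x2 \<le> grad (g i) x1 \<bullet> (x1 - x2)"
        using convex_on_grad_above_tangent[OF cg[of i] x(1) x(2) dg[of i]]
        by (simp add: inner_diff_right)
      moreover have "grad (g i) x2 \<bullet> (x1 - x2) \<le> g i x1 - g i x2"
        using convex_on_grad_above_tangent[OF cg[of i] x(2) x(1) dg[of i]] by simp
      ultimately show ?thesis
        by (simp add: add_nonneg_nonneg)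
    qed
    with convex_on_grad_monotone[OF cf x df df] show ?thesis
      unfolding inner_phi_diff by (simp add: sum_nonneg)
  qed
  then show ?thesis
    by (auto simp: monotone_map_on_def)
qed

lemma phi_differentiable:
  fixes f :: "real^'n \<Rightarrow> real" and g :: "'m::finite \<Rightarrow> real^'n \<Rightarrow> real"
  assumes "\<And>x. grad f differentiable at x"
    and "\<And>i x. g i differentiable at x" and "\<And>i x. grad (g i) differentiable at x"
  shows "phi f g differentiable at u"
proof -
  have fst: "fst differentiable at u" and snd: "(\<lambda>p. snd p $ i) differentiable at u" for i
    by (simp_all add: bounded_linear_imp_differentiable bounded_linear_fst
        bounded_linear_compose[OF bounded_linear_vec_nth bounded_linear_snd])
  have "(\<lambda>x. \<chi> i. g i x) differentiable at (fst u)"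
    using assms(2) by (subst differentiable_componentwise_within) (auto simp: Basis_vec_def inner_axis)
  then have "(\<lambda>p. \<chi> i. g i (fst p)) differentiable at u"
    using differentiable_compose[OF _ fst] by auto
  moreover have "(\<lambda>p. grad f (fst p)) differentiable at u"
    and "(\<lambda>p. grad (g i) (fst p)) differentiable at u" for i
    using assms(1,3) differentiable_compose[OF _ fst] by auto
  ultimately show ?thesis
    unfolding phi_def[abs_def] using snd
    by (intro differentiable_Pair differentiable_add differentiable_sum differentiable_scaleR
        differentiable_minus) auto
qed

definition homogenization :: "('a::real_inner \<Rightarrow> 'a) \<Rightarrow> 'a \<times> real \<Rightarrow> 'a \<times> real" where
  "homogenization F xt =
     (snd xt *\<^sub>R F ((1 / snd xt) *\<^sub>R fst xt), - (fst xt \<bullet> F ((1 / snd xt) *\<^sub>R fst xt)))"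

lemma psi_eq_homogenization_phi: "psi f g = homogenization (phi f g)"
  by (simp add: fun_eq_iff psi_def homogenization_def)

lemma inner_homogenization_diff:
  fixes x1 x2 :: "'a::real_inner"
  assumes "t1 \<noteq> 0" "t2 \<noteq> 0"
  defines "u1 \<equiv> (1 / t1) *\<^sub>R x1" and "u2 \<equiv> (1 / t2) *\<^sub>R x2"
  shows "((x1, t1) - (x2, t2)) \<bullet> (homogenization F (x1, t1) - homogenization F (x2, t2)) =
    t1 * t2 * ((u1 - u2) \<bullet> (F u1 - F u2))"
proof -
  have "x1 = t1 *\<^sub>R u1" "x2 = t2 *\<^sub>R u2"
    using assms by (simp_all add: u1_def u2_def)
  then show ?thesis
    by (simp add: homogenization_def u1_def[symmetric] u2_def[symmetric] algebra_simps)
qed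

lemma monotone_map_on_homogenization:
  assumes "monotone_map_on S F"
  shows "monotone_map_on {(x, t). 0 < t \<and> (1 / t) *\<^sub>R x \<in> S} (homogenization F)"
proof -
  have "0 \<le> ((x1, t1) - (x2, t2)) \<bullet> (homogenization F (x1, t1) - homogenization F (x2, t2))"
    if "0 < t1" "(1 / t1) *\<^sub>R x1 \<in> S" "0 < t2" "(1 / t2) *\<^sub>R x2 \<in> S" for x1 x2 t1 t2
  proof -
    have "0 \<le> ((1 / t1) *\<^sub>R x1 - (1 / t2) *\<^sub>R x2) \<bullet> (F ((1 / t1) *\<^sub>R x1) - F ((1 / t2) *\<^sub>R x2))"
      using assms that unfolding monotone_map_on_def by blast
    with that show ?thesis
      by (subst inner_homogenization_diff) auto
  qed
  then show ?thesis
    unfolding monotone_map_on_def by blast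
qed

lemma homogenization_differentiable:
  assumes "F differentiable at ((1 / t) *\<^sub>R x)" and "t \<noteq> 0"
  shows "homogenization F differentiable at (x, t)"
proof -
  have fst: "fst differentiable at (x, t)" and snd: "snd differentiable at (x, t)"
    by (simp_all add: bounded_linear_imp_differentiable bounded_linear_fst bounded_linear_snd)
  then have scale: "(\<lambda>xt. (1 / snd xt) *\<^sub>R fst xt) differentiable at (x, t)"
    using assms(2) by (auto intro!: differentiable_scaleR differentiable_divide)
  have "(\<lambda>xt. F ((1 / snd xt) *\<^sub>R fst xt)) differentiable at (x, t)"
    using differentiable_compose[OF _ scale, of F] assms(1) by simp
  then show ?thesis
    unfolding homogenization_def[abs_def]
    using fst snd
    by (intro differentiable_Pair differentiable_scaleR differentiable_minus differentiable_inner)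
qed

theorem lemma7:
  fixes f :: "real^'n \<Rightarrow> real" and g :: "'m::finite \<Rightarrow> real^'n \<Rightarrow> real"
  assumes "twice_cont_diff f" and "convex_on nonneg_orthant f"
    and "\<And>i. twice_cont_diff (g i)" and "\<And>i. convex_on nonneg_orthant (g i)"
  shows "(\<forall>xh \<in> pos_orthant. psi f g differentiable at xh \<and>
            (\<forall>d. 0 \<le> d \<bullet> frechet_derivative (psi f g) (at xh) d))
       \<and> continuous_on pos_orthant (psi f g)
       \<and> (\<forall>x1 \<in> pos_orthant. \<forall>x2 \<in> pos_orthant.
            0 \<le> (x1 - x2) \<bullet> (psi f g x1 - psi f g x2))"
proof -
  have df: "\<And>x. f differentiable at x" and dgradf: "\<And>x. grad f differentiable at x"
    and dg: "\<And>i x. g i differentiable at x" and dgradg: "\<And>i x. grad (g i) differentiable at x"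
    using assms(1,3) by (auto simp: twice_cont_diff_def)
  have "monotone_map_on nonneg_orthant (phi f g)"
    using monotone_map_on_phi[OF assms(2,4) df dg] by (simp add: nonneg_orthant_Times)
  then have mono: "monotone_map_on pos_orthant (psi f g)"
    unfolding psi_eq_homogenization_phi
    by (rule monotone_map_on_subset[OF monotone_map_on_homogenization
          pos_orthant_subset_scaled_nonneg_orthant])
  have diff: "psi f g differentiable at xh" if "xh \<in> pos_orthant" for xh
    using that unfolding psi_eq_homogenization_phi
    by (cases xh) (auto simp: pos_orthant_Pair_iff pos_orthant_real_iff
        intro!: homogenization_differentiable phi_differentiable dgradf dg dgradg)
  have "0 \<le> d \<bullet> frechet_derivative (psi f g) (at xh) d" if "xh \<in> pos_orthant" for xh d
    using monotone_map_on_has_derivative_nonneg[OF mono open_pos_orthant that]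
      diff[OF that] frechet_derivative_works by blast
  moreover have "continuous_on pos_orthant (psi f g)"
    using diff by (meson continuous_at_imp_continuous_on differentiable_imp_continuous_within)
  ultimately show ?thesis
    using diff mono by (auto simp: monotone_map_on_def)
qed

end
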